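(* Let $i\ge 1$ be an integer and let $H$ be a weighted graph. Let $B_1,B_2,P$ be sets of vertices of $H$ such that $d(B_1,B_2)\ge 2i+2$ and $H[P]$ is connected. If both $N^i[B_1\cup P]$ and $N^i[B_2\cup P]$ are weighted bipartite, then $N^i[B_1\cup B_2\cup P]$ is weighted bipartite.
   Context: A weighted graph is a graph with a weight function $\omega:E(H)\to\mathbb{N}$; the weight of a subgraph is the sum of its edge weights. $d(B_1,B_2)$ is the unweighted distance, i.e. the minimum number of edges of a path between a vertex of $B_1$ and a vertex of $B_2$. $N^i[S]$ is the set of vertices at unweighted distance at most $i$ from some vertex of $S$. A vertex set $S$ is weighted bipartite if $H[S]$ contains no cycle of odd weight. *)

theory Defs
  imports Main "HOL-Library.Extended_Nat"
begin

definition weighted_graph :: "'a set \<Rightarrow> ('a \<Rightarrow> 'a \<Rightarrow> bool) \<Rightarrow> ('a \<Rightarrow> 'a \<Rightarrow> nat) \<Rightarrow> bool" where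
  "weighted_graph V E w \<longleftrightarrow> finite V
     \<and> (\<forall>u v. E u v \<longrightarrow> u \<in> V \<and> v \<in> V)
     \<and> (\<forall>u v. E u v \<longrightarrow> E v u)
     \<and> (\<forall>u. \<not> E u u)
     \<and> (\<forall>u v. E u v \<longrightarrow> w u v = w v u)"

definition walk :: "('a \<Rightarrow> 'a \<Rightarrow> bool) \<Rightarrow> 'a list \<Rightarrow> bool" where
  "walk E xs \<longleftrightarrow> xs \<noteq> [] \<and> (\<forall>k. Suc k < length xs \<longrightarrow> E (xs ! k) (xs ! Suc k))"

text \<open>Unweighted distance between vertex sets (infinity if no path exists).\<close>
definition set_dist :: "('a \<Rightarrow> 'a \<Rightarrow> bool) \<Rightarrow> 'a set \<Rightarrow> 'a set \<Rightarrow> enat" where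
  "set_dist E A B = (INF xs \<in> {xs. walk E xs \<and> hd xs \<in> A \<and> last xs \<in> B}. enat (length xs - 1))"

definition closed_nbhd :: "('a \<Rightarrow> 'a \<Rightarrow> bool) \<Rightarrow> nat \<Rightarrow> 'a set \<Rightarrow> 'a set" where
  "closed_nbhd E i S = S \<union> {v. \<exists>xs. walk E xs \<and> hd xs \<in> S \<and> last xs = v \<and> length xs - 1 \<le> i}"

definition induced_connected :: "('a \<Rightarrow> 'a \<Rightarrow> bool) \<Rightarrow> 'a set \<Rightarrow> bool" where
  "induced_connected E S \<longleftrightarrow> S \<noteq> {} \<and>
     (\<forall>u\<in>S. \<forall>v\<in>S. \<exists>xs. walk E xs \<and> set xs \<subseteq> S \<and> hd xs = u \<and> last xs = v)"

definition cycle_in :: "('a \<Rightarrow> 'a \<Rightarrow> bool) \<Rightarrow> 'a set \<Rightarrow> 'a list \<Rightarrow> bool" where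
  "cycle_in E S cs \<longleftrightarrow> length cs \<ge> 3 \<and> distinct cs \<and> set cs \<subseteq> S \<and> walk E cs
     \<and> E (last cs) (hd cs)"

definition cycle_weight :: "('a \<Rightarrow> 'a \<Rightarrow> nat) \<Rightarrow> 'a list \<Rightarrow> nat" where
  "cycle_weight w cs = sum_list (map (\<lambda>(a, b). w a b) (zip cs (tl cs @ [hd cs])))"

definition weighted_bipartite :: "('a \<Rightarrow> 'a \<Rightarrow> bool) \<Rightarrow> ('a \<Rightarrow> 'a \<Rightarrow> nat) \<Rightarrow> 'a set \<Rightarrow> bool" where
  "weighted_bipartite E w S \<longleftrightarrow> \<not> (\<exists>cs. cycle_in E S cs \<and> odd (cycle_weight w cs))"

end

theory Submission
  imports Defs
begin

text \<open>A vertex set S is weighted bipartite iff it carries a parity potential, i.e. a labelling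
  c with w(uv) \<equiv> c(u) + c(v) (mod 2) on every edge of H[S]. Because d(B1, B2) \<ge> 2i + 2, the
  sets X = N^i[B1 \<union> P] and Y = N^i[B2 \<union> P] meet exactly in N^i[P], which is connected since
  H[P] is, and no edge joins X - Y to Y - X. Hence the potentials of X and Y differ by a
  constant on X \<inter> Y and glue to a potential on X \<union> Y = N^i[B1 \<union> B2 \<union> P].\<close>

lemma walk_Nil [simp]: "\<not> walk E []"
  by (simp add: walk_def)

lemma walk_singleton [simp]: "walk E [x]"
  by (simp add: walk_def)

lemma walk_Cons_Cons [simp]: "walk E (x # y # xs) \<longleftrightarrow> E x y \<and> walk E (y # xs)"
  unfolding walk_def by (auto simp: less_Suc_eq_0_disj)

lemma walk_append_Cons: "walk E (xs @ x # ys) \<longleftrightarrow> walk E (xs @ [x]) \<and> walk E (x # ys)"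
  by (induction xs rule: induct_list012) auto

lemma walk_snoc: "walk E xs \<Longrightarrow> E (last xs) y \<Longrightarrow> walk E (xs @ [y])"
  by (induction xs rule: induct_list012) auto

lemma walk_butlast: "walk E (xs @ [y]) \<Longrightarrow> xs \<noteq> [] \<Longrightarrow> walk E xs \<and> E (last xs) y"
  by (induction xs rule: induct_list012) auto

lemma walk_not_Nil: "walk E xs \<Longrightarrow> xs \<noteq> []"
  by auto

lemma walk_join:
  assumes "walk E xs" "walk E ys" "last xs = hd ys"
  shows "walk E (xs @ tl ys)" and "hd (xs @ tl ys) = hd xs"
    and "last (xs @ tl ys) = last ys" and "set (xs @ tl ys) \<subseteq> set xs \<union> set ys"
proof -
  obtain xs' where xs: "xs = xs' @ [hd ys]"
    using assms by (metis append_butlast_last_id walk_Nil)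
  have ys: "hd ys # tl ys = ys"
    using assms(2) by (metis list.collapse walk_Nil)
  then show "walk E (xs @ tl ys)"
    using assms walk_append_Cons[of E xs' "hd ys" "tl ys"] unfolding xs by simp
  show "hd (xs @ tl ys) = hd xs"
    unfolding xs by (simp add: hd_append)
  show "last (xs @ tl ys) = last ys"
    using ys unfolding xs by (metis append.assoc append_Cons append_Nil last_appendR list.discI)
  show "set (xs @ tl ys) \<subseteq> set xs \<union> set ys"
    using ys by (metis Un_mono set_append set_subset_Cons subset_refl)
qed

lemma walk_rev:
  assumes "symp E"
  shows "walk E xs \<Longrightarrow> walk E (rev xs)"
proof (induction xs rule: induct_list012)
  case (3 a b xs)
  then show ?case
    using walk_append_Cons[of E "rev xs" b "[a]"] assms by (auto dest: sympD)
qed auto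

fun walk_weight :: "('a \<Rightarrow> 'a \<Rightarrow> nat) \<Rightarrow> 'a list \<Rightarrow> nat" where
  "walk_weight w (x # y # xs) = w x y + walk_weight w (y # xs)"
| "walk_weight w _ = 0"

lemma walk_weight_append_Cons:
  "walk_weight w (xs @ x # ys) = walk_weight w (xs @ [x]) + walk_weight w (x # ys)"
  by (induction xs rule: induct_list012) auto

lemma walk_cut_loop:
  assumes "walk E (L @ y # M @ y # R)"
  shows "walk E (y # M @ [y])" and "walk E (L @ y # R)"
    and "walk_weight w (L @ y # M @ y # R) = walk_weight w (y # M @ [y]) + walk_weight w (L @ y # R)"
proof -
  have "walk E (L @ [y])" "walk E (y # M @ [y])" "walk E (y # R)"
    using assms walk_append_Cons[of E L y "M @ y # R"] walk_append_Cons[of E "y # M" y R] by auto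
  then show "walk E (y # M @ [y])" "walk E (L @ y # R)"
    using walk_append_Cons[of E L y R] by auto
  show "walk_weight w (L @ y # M @ y # R) = walk_weight w (y # M @ [y]) + walk_weight w (L @ y # R)"
    using walk_weight_append_Cons[of w L y "M @ y # R"] walk_weight_append_Cons[of w "y # M" y R]
      walk_weight_append_Cons[of w L y R] by simp
qed

lemma walk_weight_join:
  assumes "xs \<noteq> []" "ys \<noteq> []" "last xs = hd ys"
  shows "walk_weight w (xs @ tl ys) = walk_weight w xs + walk_weight w ys"
proof -
  obtain xs' where xs: "xs = xs' @ [hd ys]"
    using assms by (metis append_butlast_last_id)
  have "hd ys # tl ys = ys"
    using assms by simp
  then show ?thesis
    using walk_weight_append_Cons[of w xs' "hd ys" "tl ys"] unfolding xs by simp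
qed

lemma walk_weight_rev:
  assumes "\<And>u v. E u v \<Longrightarrow> w u v = w v u"
  shows "walk E xs \<Longrightarrow> walk_weight w (rev xs) = walk_weight w xs"
proof (induction xs rule: induct_list012)
  case (3 a b xs)
  then show ?case
    using walk_weight_append_Cons[of w "rev xs" b "[a]"] assms[of a b] by simp
qed auto

lemma sum_list_map_zip_tl_snoc:
  "xs \<noteq> [] \<Longrightarrow> sum_list (map (\<lambda>(a, b). w a b) (zip xs (tl xs @ [y]))) = walk_weight w (xs @ [y])"
  by (induction xs rule: induct_list012) auto

lemma cycle_weight_eq_walk_weight:
  "cs \<noteq> [] \<Longrightarrow> cycle_weight w cs = walk_weight w (cs @ [hd cs])"
  unfolding cycle_weight_def by (rule sum_list_map_zip_tl_snoc)

lemma weighted_graph_symp: "weighted_graph V E w \<Longrightarrow> symp E"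
  by (auto simp: weighted_graph_def intro: sympI)

lemma weighted_graph_weight_sym: "weighted_graph V E w \<Longrightarrow> E u v \<Longrightarrow> w u v = w v u"
  by (simp add: weighted_graph_def)

lemma simple_closed_walk_even_weight:
  assumes wg: "weighted_graph V E w" and bip: "weighted_bipartite E w S"
    and cs: "walk E (cs @ [hd cs])" "distinct cs" "cs \<noteq> []" "set cs \<subseteq> S"
  shows "even (walk_weight w (cs @ [hd cs]))"
proof -
  consider a where "cs = [a]" | a b where "cs = [a, b]" | "length cs \<ge> 3"
    using \<open>cs \<noteq> []\<close> by (induction cs rule: induct_list012) (auto simp: numeral_3_eq_3)
  then show ?thesis
  proof cases
    case 1
    then show ?thesis using cs(1) wg by (simp add: weighted_graph_def)
  next
    case 2
    then show ?thesis using cs(1) weighted_graph_weight_sym[OF wg] by simp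
  next
    case 3
    have "walk E cs" "E (last cs) (hd cs)"
      using walk_butlast[OF cs(1)] cs(3) by auto
    then have "cycle_in E S cs"
      using 3 cs by (simp add: cycle_in_def)
    then show ?thesis
      using bip cs(3) by (auto simp: weighted_bipartite_def cycle_weight_eq_walk_weight)
  qed
qed

text \<open>A closed walk that is not a cycle splits at a repeated vertex into two shorter closed walks.\<close>
lemma closed_walk_even_weight:
  assumes wg: "weighted_graph V E w" and bip: "weighted_bipartite E w S"
  shows "walk E xs \<Longrightarrow> set xs \<subseteq> S \<Longrightarrow> hd xs = last xs \<Longrightarrow> even (walk_weight w xs)"
proof (induction "length xs" arbitrary: xs rule: less_induct)
  case less
  show ?case
  proof (cases "length xs \<le> 1")
    case True
    then show ?thesis by (induction xs rule: induct_list012) auto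
  next
    case False
    obtain cs a where xs: "xs = cs @ [a]"
      by (cases xs rule: rev_cases) (use less.prems(1) in auto)
    have "cs \<noteq> []" using False xs by auto
    then have a: "a = hd cs" using less.prems(3) xs by simp
    show ?thesis
    proof (cases "distinct cs")
      case True
      then show ?thesis
        using simple_closed_walk_even_weight[OF wg bip] less.prems \<open>cs \<noteq> []\<close> unfolding xs a by simp
    next
      case False
      then obtain L y M R where "cs = L @ [y] @ M @ [y] @ R"
        using not_distinct_decomp by blast
      then have split: "xs = L @ y # M @ y # (R @ [a])"
        unfolding xs by simp
      note cut = walk_cut_loop[OF less.prems(1)[unfolded split]]
      have "even (walk_weight w (y # M @ [y]))"
        by (rule less.hyps) (use cut less.prems in \<open>auto simp: split\<close>)
      moreover have "even (walk_weight w (L @ y # R @ [a]))"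
        by (rule less.hyps) (use cut less.prems in \<open>auto simp: split xs a hd_append\<close>)
      ultimately show ?thesis
        using cut(3) unfolding split by simp
    qed
  qed
qed

lemma walks_same_ends_even_weight:
  assumes wg: "weighted_graph V E w" and bip: "weighted_bipartite E w S"
    and xs: "walk E xs" "set xs \<subseteq> S" and ys: "walk E ys" "set ys \<subseteq> S"
    and ends: "hd xs = hd ys" "last xs = last ys"
  shows "even (walk_weight w xs + walk_weight w ys)"
proof -
  have rev: "walk E (rev ys)" "last xs = hd (rev ys)"
    using ys ends walk_rev[OF weighted_graph_symp[OF wg]] by (auto simp: hd_rev)
  note closed = walk_join[OF xs(1) rev]
  have "even (walk_weight w (xs @ tl (rev ys)))"
    using closed xs ys ends by (intro closed_walk_even_weight[OF wg bip]) (auto simp: last_rev)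
  moreover have "walk_weight w (xs @ tl (rev ys)) = walk_weight w xs + walk_weight w ys"
    using walk_weight_join[OF walk_not_Nil[OF xs(1)] walk_not_Nil[OF rev(1)] rev(2)]
      walk_weight_rev[of E w, OF weighted_graph_weight_sym[OF wg] ys(1)] by auto
  ultimately show ?thesis by simp
qed

definition parity_potential :: "('a \<Rightarrow> 'a \<Rightarrow> bool) \<Rightarrow> ('a \<Rightarrow> 'a \<Rightarrow> nat) \<Rightarrow> 'a set \<Rightarrow> ('a \<Rightarrow> nat) \<Rightarrow> bool" where
  "parity_potential E w S c \<longleftrightarrow> (\<forall>u\<in>S. \<forall>v\<in>S. E u v \<longrightarrow> even (w u v + c u + c v))"

lemma walk_weight_parity:
  assumes "parity_potential E w S c"
  shows "walk E xs \<Longrightarrow> set xs \<subseteq> S \<Longrightarrow> even (walk_weight w xs + c (hd xs) + c (last xs))"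
  by (induction xs rule: induct_list012) (use assms in \<open>auto simp: parity_potential_def\<close>)

lemma parity_potential_imp_weighted_bipartite:
  assumes "parity_potential E w S c"
  shows "weighted_bipartite E w S"
  unfolding weighted_bipartite_def
proof
  assume "\<exists>cs. cycle_in E S cs \<and> odd (cycle_weight w cs)"
  then obtain cs where cs: "cycle_in E S cs" "odd (cycle_weight w cs)"
    by blast
  then have "cs \<noteq> []"
    by (auto simp: cycle_in_def)
  moreover have "walk E (cs @ [hd cs])" "set (cs @ [hd cs]) \<subseteq> S"
    using cs(1) \<open>cs \<noteq> []\<close> by (auto simp: cycle_in_def walk_snoc)
  ultimately have "even (walk_weight w (cs @ [hd cs]) + c (hd cs) + c (hd cs))"
    using walk_weight_parity[OF assms] by (metis hd_append2 last_snoc)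
  then show False
    using cs(2) \<open>cs \<noteq> []\<close> by (simp add: cycle_weight_eq_walk_weight)
qed

definition reachable_within :: "('a \<Rightarrow> 'a \<Rightarrow> bool) \<Rightarrow> 'a set \<Rightarrow> 'a \<Rightarrow> 'a \<Rightarrow> bool" where
  "reachable_within E S x y \<longleftrightarrow> (\<exists>xs. walk E xs \<and> set xs \<subseteq> S \<and> hd xs = x \<and> last xs = y)"

lemma reachable_within_refl: "x \<in> S \<Longrightarrow> reachable_within E S x x"
  unfolding reachable_within_def by (intro exI[of _ "[x]"]) simp

lemma reachable_within_edge: "x \<in> S \<Longrightarrow> y \<in> S \<Longrightarrow> E x y \<Longrightarrow> reachable_within E S x y"
  unfolding reachable_within_def by (intro exI[of _ "[x, y]"]) simp

lemma reachable_within_trans: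
  assumes "reachable_within E S x y" "reachable_within E S y z"
  shows "reachable_within E S x z"
proof -
  obtain xs ys where xs: "walk E xs" "set xs \<subseteq> S" "hd xs = x" "last xs = y"
    and ys: "walk E ys" "set ys \<subseteq> S" "hd ys = y" "last ys = z"
    using assms unfolding reachable_within_def by blast
  then have "last xs = hd ys"
    by simp
  note joined = walk_join[OF xs(1) ys(1) this]
  show ?thesis
    unfolding reachable_within_def
  proof (intro exI conjI)
    show "set (xs @ tl ys) \<subseteq> S"
      using joined(4) xs(2) ys(2) by blast
  qed (use joined xs ys in simp_all)
qed

lemma reachable_within_sym:
  "symp E \<Longrightarrow> reachable_within E S x y \<Longrightarrow> reachable_within E S y x"
  unfolding reachable_within_def
  by (metis hd_rev last_rev set_rev walk_rev)

lemma reachable_within_mono: "S \<subseteq> T \<Longrightarrow> reachable_within E S x y \<Longrightarrow> reachable_within E T x y"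
  unfolding reachable_within_def by blast

lemma induced_connected_iff_reachable_within:
  "induced_connected E S \<longleftrightarrow> S \<noteq> {} \<and> (\<forall>u\<in>S. \<forall>v\<in>S. reachable_within E S u v)"
  by (simp add: induced_connected_def reachable_within_def)

text \<open>Measure every vertex by the weight of a walk from a fixed root of its component; the
  parity of that weight does not depend on the walk chosen.\<close>
lemma weighted_bipartite_imp_parity_potential:
  assumes wg: "weighted_graph V E w" and bip: "weighted_bipartite E w S"
  obtains c where "parity_potential E w S c"
proof -
  have sym: "symp E"
    using wg by (rule weighted_graph_symp)
  define root where "root v = (SOME x. reachable_within E S x v)" for v
  define path where "path v = (SOME xs. walk E xs \<and> set xs \<subseteq> S \<and> hd xs = root v \<and> last xs = v)" for v
  have path: "walk E (path v) \<and> set (path v) \<subseteq> S \<and> hd (path v) = root v \<and> last (path v) = v"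
    if "v \<in> S" for v
  proof -
    have "reachable_within E S (root v) v"
      unfolding root_def using reachable_within_refl[OF that] by (rule someI)
    then show ?thesis
      unfolding path_def reachable_within_def by (rule someI_ex)
  qed
  have same_root: "root u = root v" if "u \<in> S" "v \<in> S" "E u v" for u v
  proof -
    have "reachable_within E S u v" "reachable_within E S v u"
      using that sym by (auto intro: reachable_within_edge dest: sympD)
    then have "reachable_within E S x u \<longleftrightarrow> reachable_within E S x v" for x
      by (meson reachable_within_trans)
    then show ?thesis
      unfolding root_def by simp
  qed
  have "parity_potential E w S (\<lambda>v. walk_weight w (path v))"
    unfolding parity_potential_def
  proof (intro ballI impI)
    fix u v
    assume uv: "u \<in> S" "v \<in> S" "E u v"
    have "walk E (path u @ [v])"
      using path[OF uv(1)] uv(3) by (simp add: walk_snoc)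
    moreover have "walk_weight w (path u @ [v]) = walk_weight w (path u) + w u v"
      using walk_weight_join[of "path u" "[u, v]" w] path[OF uv(1)] walk_not_Nil by fastforce
    ultimately have "even (walk_weight w (path u) + w u v + walk_weight w (path v))"
      using walks_same_ends_even_weight[OF wg bip, of "path u @ [v]" "path v"]
        path[OF uv(1)] path[OF uv(2)] same_root[OF uv] uv walk_not_Nil by fastforce
    then show "even (w u v + walk_weight w (path u) + walk_weight w (path v))"
      by (simp add: ac_simps)
  qed
  then show ?thesis by (rule that)
qed

lemma closed_nbhd_iff:
  "v \<in> closed_nbhd E i S \<longleftrightarrow> (\<exists>xs. walk E xs \<and> hd xs \<in> S \<and> last xs = v \<and> length xs \<le> Suc i)"
  unfolding closed_nbhd_def by (auto intro: exI[of _ "[v]"])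

lemma closed_nbhd_Un: "closed_nbhd E i (A \<union> B) = closed_nbhd E i A \<union> closed_nbhd E i B"
  unfolding closed_nbhd_def by blast

lemma subset_closed_nbhd: "S \<subseteq> closed_nbhd E i S"
  unfolding closed_nbhd_def by blast

lemma walk_subset_closed_nbhd:
  "walk E xs \<Longrightarrow> hd xs \<in> S \<Longrightarrow> length xs \<le> Suc i \<Longrightarrow> set xs \<subseteq> closed_nbhd E i S"
proof (induction xs rule: rev_induct)
  case (snoc x xs)
  show ?case
  proof (cases "xs = []")
    case True
    then show ?thesis using snoc.prems subset_closed_nbhd[of S E i] by auto
  next
    case False
    then have "set xs \<subseteq> closed_nbhd E i S"
      using snoc walk_butlast[of E xs x] by simp
    moreover have "x \<in> closed_nbhd E i S"
      using snoc.prems unfolding closed_nbhd_iff by (intro exI[of _ "xs @ [x]"]) simp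
    ultimately show ?thesis by simp
  qed
qed simp

lemma closed_nbhd_Suc_edge: "u \<in> closed_nbhd E i S \<Longrightarrow> E u v \<Longrightarrow> v \<in> closed_nbhd E (Suc i) S"
  unfolding closed_nbhd_iff
  by (metis Suc_le_mono hd_append2 last_snoc length_append_singleton walk_not_Nil walk_snoc)

lemma induced_connected_closed_nbhd:
  assumes sym: "symp E" and conn: "induced_connected E P"
  shows "induced_connected E (closed_nbhd E i P)"
proof -
  let ?N = "closed_nbhd E i P"
  have from_P: "\<exists>a\<in>P. reachable_within E ?N a u" if "u \<in> ?N" for u
    using that walk_subset_closed_nbhd unfolding closed_nbhd_iff reachable_within_def by blast
  have "reachable_within E ?N u v" if uv: "u \<in> ?N" "v \<in> ?N" for u v
  proof -
    obtain a b where "a \<in> P" "b \<in> P" "reachable_within E ?N a u" "reachable_within E ?N b v"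
      using from_P uv by blast
    moreover have "reachable_within E ?N a b"
      using conn \<open>a \<in> P\<close> \<open>b \<in> P\<close> reachable_within_mono[OF subset_closed_nbhd[of P E i]]
      unfolding induced_connected_iff_reachable_within by blast
    ultimately show ?thesis
      by (meson reachable_within_sym[OF sym] reachable_within_trans)
  qed
  then show ?thesis
    using conn subset_closed_nbhd[of P E i] unfolding induced_connected_iff_reachable_within by blast
qed

lemma set_dist_le_walk:
  "walk E xs \<Longrightarrow> hd xs \<in> A \<Longrightarrow> last xs \<in> B \<Longrightarrow> set_dist E A B \<le> enat (length xs - 1)"
  unfolding set_dist_def by (rule INF_lower) simp

lemma set_dist_le_common_nbhd:
  assumes sym: "symp E" and "v \<in> closed_nbhd E i A" "v \<in> closed_nbhd E j B"
  shows "set_dist E A B \<le> enat (i + j)"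
proof -
  obtain xs ys where xs: "walk E xs" "hd xs \<in> A" "last xs = v" "length xs \<le> Suc i"
    and ys: "walk E ys" "hd ys \<in> B" "last ys = v" "length ys \<le> Suc j"
    using assms(2,3) unfolding closed_nbhd_iff by blast
  have rev: "walk E (rev ys)" "last xs = hd (rev ys)"
    using walk_rev[OF sym ys(1)] xs(3) ys(3) walk_not_Nil[OF ys(1)] by (auto simp: hd_rev)
  note joined = walk_join[OF xs(1) rev]
  have "set_dist E A B \<le> enat (length (xs @ tl (rev ys)) - 1)"
    using joined xs ys walk_not_Nil[OF ys(1)] by (intro set_dist_le_walk) (auto simp: last_rev)
  also have "\<dots> \<le> enat (i + j)"
    using xs(4) ys(4) walk_not_Nil[OF ys(1)] by simp
  finally show ?thesis .
qed

text \<open>Potentials on X and Y differ by a constant along the connected set X \<inter> Y, so shifting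
  the one on Y - X by that constant glues them.\<close>
lemma weighted_bipartite_Un:
  assumes wg: "weighted_graph V E w"
    and bipX: "weighted_bipartite E w X" and bipY: "weighted_bipartite E w Y"
    and conn: "induced_connected E (X \<inter> Y)"
    and no_cross: "\<And>u v. u \<in> X - Y \<Longrightarrow> v \<in> Y - X \<Longrightarrow> \<not> E u v"
  shows "weighted_bipartite E w (X \<union> Y)"
proof -
  obtain cX cY where cX: "parity_potential E w X cX" and cY: "parity_potential E w Y cY"
    by (metis weighted_bipartite_imp_parity_potential[OF wg] bipX bipY)
  obtain p where p: "p \<in> X \<inter> Y"
    using conn unfolding induced_connected_def by blast
  define k where "k = cX p + cY p"
  have shift: "even (cX m + cY m + k)" if "m \<in> X \<inter> Y" for m
  proof -
    have "reachable_within E (X \<inter> Y) p m"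
      using conn p that unfolding induced_connected_iff_reachable_within by blast
    then obtain xs where xs: "walk E xs" "set xs \<subseteq> X \<inter> Y" "hd xs = p" "last xs = m"
      unfolding reachable_within_def by blast
    then have "even (walk_weight w xs + cX p + cX m)" "even (walk_weight w xs + cY p + cY m)"
      using walk_weight_parity[OF cX] walk_weight_parity[OF cY] by auto
    then show ?thesis
      unfolding k_def by presburger
  qed
  define c where "c v = (if v \<in> X then cX v else cY v + k)" for v
  have from_X: "even (w u v + c u + c v)" if "u \<in> X" "v \<in> X \<union> Y" "E u v" for u v
  proof (cases "v \<in> X")
    case True
    then show ?thesis
      using cX that unfolding parity_potential_def c_def by simp
  next
    case False
    then have "u \<in> X \<inter> Y" "v \<in> Y"
      using that no_cross by auto
    then have "even (cX u + cY u + k)" "even (w u v + cY u + cY v)"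
      using shift cY that(3) unfolding parity_potential_def by auto
    then show ?thesis
      using that(1) False unfolding c_def by presburger
  qed
  have "parity_potential E w (X \<union> Y) c"
    unfolding parity_potential_def
  proof (intro ballI impI)
    fix u v
    assume uv: "u \<in> X \<union> Y" "v \<in> X \<union> Y" "E u v"
    consider "u \<in> X" | "v \<in> X" | "u \<in> Y - X" "v \<in> Y - X"
      using uv by blast
    then show "even (w u v + c u + c v)"
    proof cases
      case 1
      then show ?thesis using from_X uv by blast
    next
      case 2
      then have "even (w v u + c v + c u)"
        using from_X uv weighted_graph_symp[OF wg] by (blast dest: sympD)
      then show ?thesis
        using weighted_graph_weight_sym[OF wg uv(3)] by (simp add: ac_simps)
    next
      case 3
      then have "even (w u v + cY u + cY v)"
        using cY uv(3) unfolding parity_potential_def by blast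
      moreover have "c u = cY u + k" "c v = cY v + k"
        using 3 by (simp_all add: c_def)
      ultimately show ?thesis
        by presburger
    qed
  qed
  then show ?thesis
    by (rule parity_potential_imp_weighted_bipartite)
qed

lemma closed_nbhd_Un_Int_far:
  assumes sym: "symp E" and far: "enat (2 * i) < set_dist E A B"
  shows "closed_nbhd E i (A \<union> P) \<inter> closed_nbhd E i (B \<union> P) = closed_nbhd E i P"
proof -
  have "u \<in> closed_nbhd E i P" if "u \<in> closed_nbhd E i (A \<union> P) \<inter> closed_nbhd E i (B \<union> P)" for u
  proof (rule ccontr)
    assume "u \<notin> closed_nbhd E i P"
    then have "u \<in> closed_nbhd E i A" "u \<in> closed_nbhd E i B"
      using that unfolding closed_nbhd_Un by auto
    then have "set_dist E A B \<le> enat (i + i)"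
      by (rule set_dist_le_common_nbhd[OF sym])
    also have "\<dots> = enat (2 * i)"
      by simp
    finally show False
      using far leD by blast
  qed
  then show ?thesis
    unfolding closed_nbhd_Un by blast
qed

lemma closed_nbhd_Un_no_cross_edge:
  assumes sym: "symp E" and far: "enat (2 * i + 1) < set_dist E A B"
    and u: "u \<in> closed_nbhd E i (A \<union> P) - closed_nbhd E i (B \<union> P)"
    and v: "v \<in> closed_nbhd E i (B \<union> P) - closed_nbhd E i (A \<union> P)"
  shows "\<not> E u v"
proof
  assume "E u v"
  have "u \<in> closed_nbhd E i A" and v: "v \<in> closed_nbhd E i B"
    using u v unfolding closed_nbhd_Un by auto
  have "u \<in> closed_nbhd E (Suc i) B"
    using closed_nbhd_Suc_edge[OF v sympD[OF sym \<open>E u v\<close>]] .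
  then have "set_dist E A B \<le> enat (i + Suc i)"
    by (rule set_dist_le_common_nbhd[OF sym \<open>u \<in> closed_nbhd E i A\<close>])
  also have "\<dots> = enat (2 * i + 1)"
    by simp
  finally show False
    using far leD by blast
qed

theorem lemma4p3:
  fixes V :: "'a set" and E :: "'a \<Rightarrow> 'a \<Rightarrow> bool" and w :: "'a \<Rightarrow> 'a \<Rightarrow> nat"
    and B1 B2 P :: "'a set" and i :: nat
  assumes "i \<ge> 1"
    and "weighted_graph V E w"
    and "B1 \<subseteq> V" and "B2 \<subseteq> V" and "P \<subseteq> V"
    and "set_dist E B1 B2 \<ge> enat (2 * i + 2)"
    and "induced_connected E P"
    and "weighted_bipartite E w (closed_nbhd E i (B1 \<union> P))"
    and "weighted_bipartite E w (closed_nbhd E i (B2 \<union> P))"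
  shows "weighted_bipartite E w (closed_nbhd E i (B1 \<union> B2 \<union> P))"
proof -
  have sym: "symp E"
    using assms(2) by (rule weighted_graph_symp)
  have "enat (2 * i + 1) < enat (2 * i + 2)"
    by simp
  then have far: "enat (2 * i + 1) < set_dist E B1 B2"
    using assms(6) by (rule order_less_le_trans)
  have "enat (2 * i) < enat (2 * i + 1)"
    by simp
  then have "enat (2 * i) < set_dist E B1 B2"
    using far by (rule order.strict_trans)
  then have "induced_connected E (closed_nbhd E i (B1 \<union> P) \<inter> closed_nbhd E i (B2 \<union> P))"
    using induced_connected_closed_nbhd[OF sym assms(7)] closed_nbhd_Un_Int_far[OF sym] by simp
  then have "weighted_bipartite E w (closed_nbhd E i (B1 \<union> P) \<union> closed_nbhd E i (B2 \<union> P))"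
    using weighted_bipartite_Un[OF assms(2,8,9)] closed_nbhd_Un_no_cross_edge[OF sym far] by blast
  then show ?thesis
    by (simp add: closed_nbhd_Un Un_ac)
qed

end
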